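(* Let $A$ be a T-brace and let $n$ be a natural number. Then for every $a\in\zeta_n(\star,A)$, the subbrace $\mathbf{br}(a)$ generated by $a$ is an ideal of $A$.
   Context: A (left) brace is a set $A$ with two operations $+$ and $\cdot$ such that $(A,+)$ is an abelian group, $(A,\cdot)$ is a group, and $a(b+c)=ab+ac-a$ for all $a,b,c\in A$. Put $a\star b=ab-a-b$. A subbrace is a subset which is a subgroup of both $(A,+)$ and $(A,\cdot)$; $\mathbf{br}(a)$ is the intersection of all subbraces containing $a$. A subbrace $L$ is an ideal if $a\star z, z\star a\in L$ for all $a\in A$, $z\in L$, and then the quotient brace $A/L$ is defined. $A$ is a T-brace if whenever $I$ is an ideal of $J$ and $J$ is an ideal of $A$, then $I$ is an ideal of $A$. The $\star$-center is $\zeta(\star,A)=\{a: a\star x=x\star a=0\ \forall x\}$; the upper $\star$-central series is $\zeta_0(\star,A)=0$, $\zeta_{n+1}(\star,A)/\zeta_n(\star,A)=\zeta(\star,A/\zeta_n(\star,A))$, each term an ideal of $A$. *)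

theory Defs
  imports "HOL-Algebra.QuotRing"
begin

definition brace :: "('a, 'b) ring_scheme \<Rightarrow> bool" where
  "brace R \<longleftrightarrow> abelian_group R \<and> group R \<and>
     (\<forall>a\<in>carrier R. \<forall>b\<in>carrier R. \<forall>c\<in>carrier R.
        a \<otimes>\<^bsub>R\<^esub> (b \<oplus>\<^bsub>R\<^esub> c) = a \<otimes>\<^bsub>R\<^esub> b \<oplus>\<^bsub>R\<^esub> a \<otimes>\<^bsub>R\<^esub> c \<ominus>\<^bsub>R\<^esub> a)"

definition bstar :: "('a, 'b) ring_scheme \<Rightarrow> 'a \<Rightarrow> 'a \<Rightarrow> 'a" where
  "bstar R a b = a \<otimes>\<^bsub>R\<^esub> b \<ominus>\<^bsub>R\<^esub> a \<ominus>\<^bsub>R\<^esub> b"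

definition subbrace :: "('a, 'b) ring_scheme \<Rightarrow> 'a set \<Rightarrow> bool" where
  "subbrace R S \<longleftrightarrow> subgroup S (add_monoid R) \<and> subgroup S R"

definition br :: "('a, 'b) ring_scheme \<Rightarrow> 'a \<Rightarrow> 'a set" where
  "br R a = \<Inter>{S. subbrace R S \<and> a \<in> S}"

definition brace_ideal :: "('a, 'b) ring_scheme \<Rightarrow> 'a set \<Rightarrow> bool" where
  "brace_ideal R L \<longleftrightarrow> subbrace R L \<and>
     (\<forall>a\<in>carrier R. \<forall>z\<in>L. bstar R a z \<in> L \<and> bstar R z a \<in> L)"

definition T_brace :: "('a, 'b) ring_scheme \<Rightarrow> bool" where
  "T_brace R \<longleftrightarrow> brace R \<and>
     (\<forall>I J. brace_ideal R J \<and> brace_ideal (R\<lparr>carrier := J\<rparr>) I \<longrightarrow> brace_ideal R I)"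

definition star_center :: "('a, 'b) ring_scheme \<Rightarrow> 'a set" where
  "star_center R = {a \<in> carrier R. \<forall>x\<in>carrier R.
       bstar R a x = \<zero>\<^bsub>R\<^esub> \<and> bstar R x a = \<zero>\<^bsub>R\<^esub>}"

fun upper_star_central :: "('a, 'b) ring_scheme \<Rightarrow> nat \<Rightarrow> 'a set" where
  "upper_star_central R 0 = {\<zero>\<^bsub>R\<^esub>}"
| "upper_star_central R (Suc n) =
     {a \<in> carrier R. upper_star_central R n +>\<^bsub>R\<^esub> a
                      \<in> star_center (R Quot upper_star_central R n)}"

end

theory Submission
  imports Defs
begin

(* Let Z_i be the upper star-central series and B = br(a), so B \<subseteq> Z_n. The sets
   L_i = B + Z_i are subbraces with B = L_0 \<subseteq> L_1 \<subseteq> ... \<subseteq> L_n = Z_n. Modulo Z_i the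
   elements of Z_(i+1) are star-central, so L_(i+1) \<star> L_i and L_i \<star> L_(i+1) reduce modulo
   Z_i to B \<star> B \<subseteq> B: each L_i is an ideal of L_(i+1). Since L_n is an ideal of A, the
   T-brace property propagates ideality down the chain to L_0 = B.

   Computing modulo an ideal Z rests on two brace facts: additive and multiplicative cosets
   agree (x + Z = x Z), and (x y) \<star> z = x \<star> (y \<star> z) + y \<star> z + x \<star> z. *)

no_notation Sum_Type.Plus (infixr \<open><+>\<close> 65)

section \<open>Left braces and subbraces\<close>

locale left_brace = abelian_group A + group A for A (structure) +
  assumes mult_add_distrib:
    "\<lbrakk>a \<in> carrier A; b \<in> carrier A; c \<in> carrier A\<rbrakk> \<Longrightarrow>
     a \<otimes> (b \<oplus> c) = a \<otimes> b \<oplus> a \<otimes> c \<ominus> a"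

lemma brace_imp_left_brace: "brace A \<Longrightarrow> left_brace A"
  unfolding brace_def left_brace_def left_brace_axioms_def by auto

context left_brace
begin

abbreviation star (infixl "\<star>" 70) where "x \<star> y \<equiv> bstar A x y"

lemma star_closed [simp]: "x \<in> carrier A \<Longrightarrow> y \<in> carrier A \<Longrightarrow> x \<star> y \<in> carrier A"
  by (simp add: bstar_def)

lemma one_eq_zero: "\<one> = \<zero>"
proof -
  have "\<one> \<otimes> \<zero> = \<one> \<otimes> \<zero> \<oplus> \<one> \<otimes> \<zero> \<ominus> \<one>"
    using mult_add_distrib[of \<one> \<zero> \<zero>] by simp
  then have "\<zero> = \<ominus> \<one>" by (simp add: a_minus_def)
  then show ?thesis by (metis add.inv_eq_1_iff one_closed)
qed

lemma mult_zero_left [simp]: "x \<in> carrier A \<Longrightarrow> \<zero> \<otimes> x = x"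
  using l_one[of x] unfolding one_eq_zero .

lemma mult_zero_right [simp]: "x \<in> carrier A \<Longrightarrow> x \<otimes> \<zero> = x"
  using r_one[of x] unfolding one_eq_zero .

lemma a_inv_zero [simp]: "\<ominus> \<zero> = \<zero>"
  using add.inv_one unfolding a_inv_def .

lemma inv_zero [simp]: "inv \<zero> = \<zero>"
  using inv_one unfolding one_eq_zero .

lemma star_zero_left [simp]: "x \<in> carrier A \<Longrightarrow> \<zero> \<star> x = \<zero>"
  by (simp add: bstar_def a_minus_def r_neg)

lemma star_zero_right [simp]: "x \<in> carrier A \<Longrightarrow> x \<star> \<zero> = \<zero>"
  by (simp add: bstar_def a_minus_def r_neg)

lemma mult_eq_add_star: "x \<in> carrier A \<Longrightarrow> y \<in> carrier A \<Longrightarrow> x \<otimes> y = x \<oplus> y \<oplus> x \<star> y"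
  unfolding bstar_def a_minus_def by (simp add: a_assoc a_comm r_neg2)

lemma mult_add_eq_mult_add_star:
  "a \<in> carrier A \<Longrightarrow> b \<in> carrier A \<Longrightarrow> c \<in> carrier A \<Longrightarrow> a \<otimes> (b \<oplus> c) = a \<otimes> b \<oplus> a \<star> c \<oplus> c"
  using mult_add_distrib[of a b c] mult_eq_add_star[of a c]
  by (simp add: a_minus_def a_ac) (use a_lcomm r_neg2 in fastforce)

lemma star_add_right:
  "x \<in> carrier A \<Longrightarrow> y \<in> carrier A \<Longrightarrow> z \<in> carrier A \<Longrightarrow> x \<star> (y \<oplus> z) = x \<star> y \<oplus> x \<star> z"
  unfolding bstar_def by (simp add: mult_add_distrib a_minus_def minus_add a_ac)

lemma star_mult_left:
  assumes "x \<in> carrier A" "y \<in> carrier A" "z \<in> carrier A"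
  shows "(x \<otimes> y) \<star> z = x \<star> (y \<star> z) \<oplus> y \<star> z \<oplus> x \<star> z"
proof -
  have "x \<otimes> (y \<otimes> z) = x \<otimes> y \<oplus> x \<star> (z \<oplus> y \<star> z) \<oplus> (z \<oplus> y \<star> z)"
    using assms mult_add_eq_mult_add_star[of x y "z \<oplus> y \<star> z"]
    by (simp add: mult_eq_add_star[of y z] a_assoc)
  then show ?thesis
    using assms unfolding bstar_def[of A "x \<otimes> y"]
    by (simp add: m_assoc star_add_right a_minus_def a_ac minus_add) (use a_lcomm r_neg2 in fastforce)
qed

lemma mult_star_inv_add:
  assumes "x \<in> carrier A" "y \<in> carrier A"
  shows "x \<otimes> (inv x \<star> y \<oplus> y) = x \<oplus> y"
proof -
  have "inv x \<otimes> (x \<oplus> y) = inv x \<star> y \<oplus> y"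
    using assms mult_add_eq_mult_add_star[of "inv x" x y] by (simp add: one_eq_zero)
  then show ?thesis
    using assms by (metis a_closed inv_closed m_assoc r_inv l_one)
qed

lemma subbrace_carrier: "subbrace A B \<Longrightarrow> B \<subseteq> carrier A"
  unfolding subbrace_def using subgroup.subset by blast

lemma
  assumes "subbrace A B"
  shows subbrace_zero: "\<zero> \<in> B"
    and subbrace_add: "x \<in> B \<Longrightarrow> y \<in> B \<Longrightarrow> x \<oplus> y \<in> B"
    and subbrace_a_inv: "x \<in> B \<Longrightarrow> \<ominus> x \<in> B"
    and subbrace_mult: "x \<in> B \<Longrightarrow> y \<in> B \<Longrightarrow> x \<otimes> y \<in> B"
    and subbrace_inv: "x \<in> B \<Longrightarrow> inv x \<in> B"
  using assms subgroup.one_closed subgroup.m_closed subgroup.m_inv_closed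
  unfolding subbrace_def a_inv_def by fastforce+

lemma subbrace_star: "subbrace A B \<Longrightarrow> x \<in> B \<Longrightarrow> y \<in> B \<Longrightarrow> x \<star> y \<in> B"
  unfolding bstar_def a_minus_def by (intro subbrace_add subbrace_a_inv subbrace_mult)

lemma subbraceI:
  assumes "B \<subseteq> carrier A" "\<zero> \<in> B"
    and "\<And>x y. x \<in> B \<Longrightarrow> y \<in> B \<Longrightarrow> x \<oplus> y \<in> B" "\<And>x. x \<in> B \<Longrightarrow> \<ominus> x \<in> B"
    and "\<And>x y. x \<in> B \<Longrightarrow> y \<in> B \<Longrightarrow> x \<otimes> y \<in> B" "\<And>x. x \<in> B \<Longrightarrow> inv x \<in> B"
  shows "subbrace A B"
  unfolding subbrace_def
proof
  show "subgroup B (add_monoid A)"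
    by (rule subgroup.intro) (use assms in \<open>auto simp: a_inv_def[symmetric]\<close>)
  show "subgroup B A"
    by (rule subgroup.intro) (use assms in \<open>auto simp: one_eq_zero\<close>)
qed

lemma subbrace_br: "a \<in> carrier A \<Longrightarrow> subbrace A (br A a)"
  unfolding br_def
proof (rule subbraceI)
  assume "a \<in> carrier A"
  then have "subbrace A (carrier A)"
    by (intro subbraceI) auto
  then show "\<Inter>{S. subbrace A S \<and> a \<in> S} \<subseteq> carrier A"
    using \<open>a \<in> carrier A\<close> by blast
qed (auto intro: subbrace_zero subbrace_add subbrace_a_inv subbrace_mult subbrace_inv)

lemma br_subset: "subbrace A S \<Longrightarrow> a \<in> S \<Longrightarrow> br A a \<subseteq> S"
  unfolding br_def by blast

lemma set_add_zero:
  assumes "B \<subseteq> carrier A"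
  shows "B <+> {\<zero>} = B"
proof -
  have "b \<oplus> \<zero> = b" if "b \<in> B" for b
    using assms that by auto
  then show ?thesis
    unfolding set_add_def' by auto
qed

lemma brace_ideal_zero: "brace_ideal A {\<zero>}"
proof -
  have "subbrace A {\<zero>}"
    by (rule subbraceI) auto
  then show ?thesis
    unfolding brace_ideal_def by simp
qed

lemma brace_ideal_restrict:
  assumes I: "subbrace A I" and J: "subbrace A J" and "I \<subseteq> J"
    and star: "\<And>u v. u \<in> J \<Longrightarrow> v \<in> I \<Longrightarrow> u \<star> v \<in> I \<and> v \<star> u \<in> I"
  shows "brace_ideal (A\<lparr>carrier := J\<rparr>) I"
proof -
  have add_monoid_restrict: "add_monoid (A\<lparr>carrier := J\<rparr>) = (add_monoid A)\<lparr>carrier := J\<rparr>"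
    by simp
  have "subgroup I (add_monoid (A\<lparr>carrier := J\<rparr>))"
    using I J \<open>I \<subseteq> J\<close> unfolding add_monoid_restrict subbrace_def
    by (intro add.subgroup_incl) auto
  moreover have "subgroup I (A\<lparr>carrier := J\<rparr>)"
    using I J \<open>I \<subseteq> J\<close> unfolding subbrace_def by (intro subgroup_incl) auto
  moreover have "bstar (A\<lparr>carrier := J\<rparr>) u v = u \<star> v" if "u \<in> J" "v \<in> J" for u v
  proof -
    have "a_inv (A\<lparr>carrier := J\<rparr>) w = \<ominus> w" if "w \<in> J" for w
      using add.m_inv_consistent[of J w] J that
      unfolding add_monoid_restrict subbrace_def a_inv_def by simp
    then show ?thesis
      using that subbrace_mult[OF J] subbrace_add[OF J] subbrace_a_inv[OF J]
      unfolding bstar_def a_minus_def by simp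
  qed
  ultimately show ?thesis
    using star \<open>I \<subseteq> J\<close> unfolding brace_ideal_def subbrace_def by auto
qed

end

section \<open>Cosets of an ideal\<close>

locale left_brace_ideal = left_brace + fixes Z assumes ideal: "brace_ideal A Z"

lemma (in left_brace) left_brace_idealI: "brace_ideal A Z \<Longrightarrow> left_brace_ideal A Z"
  by (intro left_brace_ideal.intro left_brace_axioms left_brace_ideal_axioms.intro)

context left_brace_ideal
begin

lemma ideal_subbrace: "subbrace A Z"
  and star_mem_right: "x \<in> carrier A \<Longrightarrow> z \<in> Z \<Longrightarrow> x \<star> z \<in> Z"
  and star_mem_left: "x \<in> carrier A \<Longrightarrow> z \<in> Z \<Longrightarrow> z \<star> x \<in> Z"
  using ideal unfolding brace_ideal_def by auto

lemma ideal_carrier: "z \<in> Z \<Longrightarrow> z \<in> carrier A"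
  using subbrace_carrier[OF ideal_subbrace] by blast

sublocale abelian_subgroup Z A
  using ideal_subbrace
  by (intro abelian_subgroupI3 additive_subgroup.intro abelian_group_axioms)
     (simp add: subbrace_def)

lemma rcos_eq_iff:
  assumes "x \<in> carrier A" "y \<in> carrier A"
  shows "Z +> x = Z +> y \<longleftrightarrow> (\<exists>z\<in>Z. x = y \<oplus> z)"
proof
  assume "Z +> x = Z +> y"
  then have "x \<in> Z +> y" using a_rcos_self[OF assms(1)] by simp
  then show "\<exists>z\<in>Z. x = y \<oplus> z"
    unfolding a_r_coset_def' using assms ideal_carrier by (auto simp: a_comm)
next
  assume "\<exists>z\<in>Z. x = y \<oplus> z"
  then have "x \<in> Z +> y"
    unfolding a_r_coset_def' using assms ideal_carrier by (auto simp: a_comm)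
  then show "Z +> x = Z +> y" using a_repr_independence' assms by blast
qed

lemma rcos_add_mem: "x \<in> carrier A \<Longrightarrow> z \<in> Z \<Longrightarrow> Z +> (x \<oplus> z) = Z +> x"
  using rcos_eq_iff ideal_carrier by auto

lemma rcos_eq_ideal_iff: "x \<in> carrier A \<Longrightarrow> Z +> x = Z \<longleftrightarrow> x \<in> Z"
  using a_rcos_const a_repr_independenceD by blast

lemma add_mem_eq_mult_mem:
  assumes "x \<in> carrier A" "z \<in> Z"
  obtains z' where "z' \<in> Z" "x \<oplus> z = x \<otimes> z'"
proof
  show "inv x \<star> z \<oplus> z \<in> Z"
    using assms by (intro subbrace_add[OF ideal_subbrace] star_mem_right) auto
  show "x \<oplus> z = x \<otimes> (inv x \<star> z \<oplus> z)"
    using assms ideal_carrier by (simp add: mult_star_inv_add)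
qed

lemma rcos_mult_star:
  assumes "x \<in> carrier A" "c \<in> carrier A" "y \<in> carrier A" "c \<star> y \<in> Z"
  shows "Z +> ((x \<otimes> c) \<star> y) = Z +> (x \<star> y)"
proof -
  have "(x \<otimes> c) \<star> y = x \<star> y \<oplus> (x \<star> (c \<star> y) \<oplus> c \<star> y)"
    using assms by (simp add: star_mult_left a_ac)
  moreover have "x \<star> (c \<star> y) \<oplus> c \<star> y \<in> Z"
    using assms subbrace_add[OF ideal_subbrace] star_mem_right by simp
  ultimately show ?thesis
    using assms by (simp add: rcos_add_mem)
qed

lemma rcos_star:
  assumes "x \<in> carrier A" "x' \<in> carrier A" "y \<in> carrier A" "y' \<in> carrier A"
    and "Z +> x = Z +> x'" "Z +> y = Z +> y'"
  shows "Z +> (x \<star> y) = Z +> (x' \<star> y')"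
proof -
  obtain z where z: "z \<in> Z" "y = y' \<oplus> z"
    using assms rcos_eq_iff by blast
  obtain w where w: "w \<in> Z" "x = x' \<otimes> w"
    using assms rcos_eq_iff add_mem_eq_mult_mem by metis
  have "Z +> (x \<star> y) = Z +> (x \<star> y')"
    using assms z ideal_carrier by (simp add: star_add_right rcos_add_mem star_mem_right)
  also have "\<dots> = Z +> (x' \<star> y')"
    using assms w ideal_carrier by (simp add: rcos_mult_star star_mem_left)
  finally show ?thesis .
qed

lemma rcos_mult:
  assumes "x \<in> carrier A" "x' \<in> carrier A" "y \<in> carrier A" "y' \<in> carrier A"
    and "Z +> x = Z +> x'" "Z +> y = Z +> y'"
  shows "Z +> (x \<otimes> y) = Z +> (x' \<otimes> y')"
  using assms rcos_star[OF assms] by (simp add: mult_eq_add_star a_rcos_sum[symmetric])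

lemma rcos_inv:
  assumes "x \<in> carrier A" "x' \<in> carrier A" "Z +> x = Z +> x'"
  shows "Z +> inv x = Z +> inv x'"
proof -
  obtain w where w: "w \<in> Z" "x = x' \<otimes> w"
    using assms rcos_eq_iff add_mem_eq_mult_mem by metis
  have "inv x = inv w \<otimes> inv x'"
    using assms w ideal_carrier by (simp add: inv_mult_group)
  also have "\<dots> = inv x' \<oplus> (inv w \<oplus> inv w \<star> inv x')"
    using assms w ideal_carrier mult_eq_add_star[of "inv w" "inv x'"] by (simp add: a_ac)
  finally have "inv x = inv x' \<oplus> (inv w \<oplus> inv w \<star> inv x')" .
  moreover have "inv w \<oplus> inv w \<star> inv x' \<in> Z"
    using assms w
    by (intro subbrace_add[OF ideal_subbrace] subbrace_inv[OF ideal_subbrace] star_mem_left) auto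
  ultimately show ?thesis
    using assms by (simp add: rcos_add_mem)
qed

lemma rcos_mult_eq_add:
  "x \<in> carrier A \<Longrightarrow> y \<in> carrier A \<Longrightarrow> x \<star> y \<in> Z \<Longrightarrow> Z +> (x \<otimes> y) = Z +> (x \<oplus> y)"
  by (simp add: mult_eq_add_star rcos_add_mem)

end

section \<open>The star-centre modulo an ideal\<close>

text \<open>The preimage in \<open>A\<close> of \<open>\<zeta>(\<star>, A/Z)\<close>, see \<open>rcos_mem_star_center_quot_iff\<close>.\<close>

definition star_center_mod :: "('a, 'b) ring_scheme \<Rightarrow> 'a set \<Rightarrow> 'a set" where
  "star_center_mod R Z = {c \<in> carrier R. \<forall>x\<in>carrier R. bstar R c x \<in> Z \<and> bstar R x c \<in> Z}"

context left_brace_ideal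
begin

lemma star_center_modI:
  assumes "c \<in> carrier A" "\<And>y. y \<in> carrier A \<Longrightarrow> c \<star> y \<in> Z \<and> y \<star> c \<in> Z"
  shows "c \<in> star_center_mod A Z"
  using assms unfolding star_center_mod_def by blast

lemma star_center_modD:
  assumes "c \<in> star_center_mod A Z" "y \<in> carrier A"
  shows "c \<star> y \<in> Z" "y \<star> c \<in> Z"
  using assms unfolding star_center_mod_def by auto

lemma star_center_mod_carrier: "star_center_mod A Z \<subseteq> carrier A"
  unfolding star_center_mod_def by blast

lemma ideal_subset_star_center_mod: "Z \<subseteq> star_center_mod A Z"
  using ideal_carrier star_mem_left star_mem_right by (auto intro: star_center_modI)

lemma star_center_mod_rcos:
  assumes c: "c \<in> star_center_mod A Z" and x: "x \<in> carrier A" and rcos: "Z +> x = Z +> c"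
  shows "x \<in> star_center_mod A Z"
proof (rule star_center_modI[OF x])
  fix y assume y: "y \<in> carrier A"
  have cC: "c \<in> carrier A" using c star_center_mod_carrier by blast
  have "Z +> (x \<star> y) = Z +> (c \<star> y)" "Z +> (y \<star> x) = Z +> (y \<star> c)"
    using rcos_star[OF x cC y y rcos refl] rcos_star[OF y y x cC refl rcos] .
  then show "x \<star> y \<in> Z \<and> y \<star> x \<in> Z"
    using star_center_modD[OF c y] x y cC by (simp add: rcos_eq_ideal_iff[symmetric])
qed

lemma star_center_mod_mult:
  assumes c: "c \<in> star_center_mod A Z" and d: "d \<in> star_center_mod A Z"
  shows "c \<otimes> d \<in> star_center_mod A Z"
proof -
  have cC: "c \<in> carrier A" and dC: "d \<in> carrier A"
    using c d star_center_mod_carrier by auto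
  show ?thesis
  proof (rule star_center_modI)
    fix y assume y: "y \<in> carrier A"
    have "Z +> ((c \<otimes> d) \<star> y) = Z +> (c \<star> y)"
      using cC dC y star_center_modD(1)[OF d y] by (rule rcos_mult_star)
    then have "(c \<otimes> d) \<star> y \<in> Z"
      using cC dC y star_center_modD(1)[OF c y] by (simp add: rcos_eq_ideal_iff[symmetric])
    moreover have "y \<star> (c \<otimes> d) = y \<star> c \<oplus> y \<star> d \<oplus> y \<star> (c \<star> d)"
      using cC dC y by (simp add: mult_eq_add_star star_add_right)
    then have "y \<star> (c \<otimes> d) \<in> Z"
      using star_center_modD(2)[OF c y] star_center_modD(2)[OF d y]
        star_mem_right[OF y star_center_modD(1)[OF c dC]] subbrace_add[OF ideal_subbrace]
      by simp
    ultimately show "(c \<otimes> d) \<star> y \<in> Z \<and> y \<star> (c \<otimes> d) \<in> Z" ..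
  qed (use cC dC in simp)
qed

lemma star_center_mod_add:
  assumes c: "c \<in> star_center_mod A Z" and d: "d \<in> star_center_mod A Z"
  shows "c \<oplus> d \<in> star_center_mod A Z"
proof (rule star_center_mod_rcos[OF star_center_mod_mult[OF c d]])
  have cC: "c \<in> carrier A" and dC: "d \<in> carrier A"
    using c d star_center_mod_carrier by auto
  then show "c \<oplus> d \<in> carrier A" by simp
  show "Z +> (c \<oplus> d) = Z +> (c \<otimes> d)"
    using rcos_mult_eq_add[OF cC dC star_center_modD(1)[OF c dC]] by simp
qed

lemma star_center_mod_add_inv:
  assumes c: "c \<in> star_center_mod A Z"
  shows "c \<oplus> inv c \<in> Z"
proof -
  have cC: "c \<in> carrier A" and icC: "inv c \<in> carrier A"
    using c star_center_mod_carrier by auto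
  have "Z +> (c \<oplus> inv c) = Z +> (c \<otimes> inv c)"
    using rcos_mult_eq_add[OF cC icC star_center_modD(1)[OF c icC]] by simp
  also have "\<dots> = Z"
    using cC subbrace_zero[OF ideal_subbrace] by (simp add: one_eq_zero rcos_eq_ideal_iff)
  finally show ?thesis
    using cC by (simp add: rcos_eq_ideal_iff)
qed

lemma star_center_mod_inv:
  assumes c: "c \<in> star_center_mod A Z"
  shows "inv c \<in> star_center_mod A Z"
proof -
  have cC: "c \<in> carrier A" using c star_center_mod_carrier by blast
  show ?thesis
  proof (rule star_center_modI)
    fix y assume y: "y \<in> carrier A"
    have "inv c \<star> y \<in> Z"
    proof -
      have "Z +> (inv c \<star> y) = Z +> ((inv c \<otimes> c) \<star> y)"
        using cC y star_center_modD(1)[OF c y] by (intro rcos_mult_star[symmetric]) auto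
      also have "\<dots> = Z"
        using cC y subbrace_zero[OF ideal_subbrace] by (simp add: one_eq_zero rcos_eq_ideal_iff)
      finally show ?thesis
        using cC y by (simp add: rcos_eq_ideal_iff)
    qed
    moreover have "y \<star> inv c \<in> Z"
    proof -
      have "Z +> (y \<star> inv c) = Z +> (y \<star> inv c \<oplus> y \<star> c)"
        using cC y star_center_modD(2)[OF c y] by (simp add: rcos_add_mem)
      also have "\<dots> = Z"
        using cC y star_mem_right[OF y star_center_mod_add_inv[OF c]]
        by (simp add: star_add_right[symmetric] a_comm rcos_eq_ideal_iff)
      finally show ?thesis
        using cC y by (simp add: rcos_eq_ideal_iff)
    qed
    ultimately show "inv c \<star> y \<in> Z \<and> y \<star> inv c \<in> Z" ..
  qed (use cC in simp)
qed

lemma star_center_mod_a_inv: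
  assumes c: "c \<in> star_center_mod A Z"
  shows "\<ominus> c \<in> star_center_mod A Z"
proof (rule star_center_mod_rcos[OF star_center_mod_inv[OF c]])
  have cC: "c \<in> carrier A" using c star_center_mod_carrier by blast
  then show "\<ominus> c \<in> carrier A" by simp
  have "Z +> inv c = Z +> (\<ominus> c \<oplus> (c \<oplus> inv c))"
    using cC by (simp add: a_assoc[symmetric] l_neg)
  also have "\<dots> = Z +> (\<ominus> c)"
    using cC star_center_mod_add_inv[OF c] by (simp add: rcos_add_mem)
  finally show "Z +> (\<ominus> c) = Z +> inv c" by simp
qed

lemma brace_ideal_star_center_mod: "brace_ideal A (star_center_mod A Z)"
proof -
  have "subbrace A (star_center_mod A Z)"
    using ideal_subset_star_center_mod subbrace_zero[OF ideal_subbrace] star_center_mod_carrier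
    by (intro subbraceI star_center_mod_add star_center_mod_a_inv star_center_mod_mult
        star_center_mod_inv) auto
  moreover have "x \<star> c \<in> star_center_mod A Z" "c \<star> x \<in> star_center_mod A Z"
    if "x \<in> carrier A" "c \<in> star_center_mod A Z" for x c
    using star_center_modD[OF that(2,1)] ideal_subset_star_center_mod by auto
  ultimately show ?thesis
    unfolding brace_ideal_def by blast
qed

lemma quot_add:
  "x \<in> carrier A \<Longrightarrow> y \<in> carrier A \<Longrightarrow> (Z +> x) \<oplus>\<^bsub>A Quot Z\<^esub> (Z +> y) = Z +> (x \<oplus> y)"
  by (simp add: FactRing_def a_rcos_sum)

lemma quot_a_inv:
  assumes "x \<in> carrier A"
  shows "\<ominus>\<^bsub>A Quot Z\<^esub> (Z +> x) = Z +> (\<ominus> x)"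
proof -
  have "add_monoid (A Quot Z) = A A_Mod Z"
    by (simp add: FactRing_def A_FactGroup_def')
  moreover have "Z +> x \<in> carrier (A A_Mod Z)"
    using assms a_subset by (simp add: A_FactGroup_def' a_rcosetsI)
  ultimately show ?thesis
    using assms by (simp add: a_inv_def a_inv_FactGroup a_rcos_inv)
qed

lemma quot_mult:
  assumes "x \<in> carrier A" "y \<in> carrier A"
  shows "(Z +> x) \<otimes>\<^bsub>A Quot Z\<^esub> (Z +> y) = Z +> (x \<otimes> y)"
proof -
  have "Z +> (a \<otimes> b) = Z +> (x \<otimes> y)" if a: "a \<in> Z +> x" and b: "b \<in> Z +> y" for a b
    using a_repr_independence'[OF a assms(1)] a_repr_independence'[OF b assms(2)]
    by (intro rcos_mult a_elemrcos_carrier[OF assms(1) a] a_elemrcos_carrier[OF assms(2) b] assms)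
      simp_all
  then have "(\<Union>a\<in>Z +> x. \<Union>b\<in>Z +> y. Z +> (a \<otimes> b)) = (\<Union>a\<in>Z +> x. \<Union>b\<in>Z +> y. Z +> (x \<otimes> y))"
    by (intro SUP_cong refl) blast
  also have "\<dots> = Z +> (x \<otimes> y)"
    using assms a_rcos_self by (simp add: UN_constant) blast
  finally show ?thesis
    by (simp add: FactRing_def rcoset_mult_def)
qed

lemma quot_star:
  "x \<in> carrier A \<Longrightarrow> y \<in> carrier A \<Longrightarrow> bstar (A Quot Z) (Z +> x) (Z +> y) = Z +> (x \<star> y)"
  by (simp add: bstar_def a_minus_def quot_mult quot_a_inv quot_add)

lemma rcos_mem_star_center_quot_iff:
  assumes "x \<in> carrier A"
  shows "Z +> x \<in> star_center (A Quot Z) \<longleftrightarrow> x \<in> star_center_mod A Z"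
proof -
  have "Z +> x \<in> star_center (A Quot Z) \<longleftrightarrow>
      (\<forall>y\<in>carrier A. Z +> (x \<star> y) = Z \<and> Z +> (y \<star> x) = Z)"
    using assms unfolding star_center_def
    by (auto simp: FactRing_def A_RCOSETS_def' quot_star[symmetric])
  also have "\<dots> \<longleftrightarrow> x \<in> star_center_mod A Z"
    using assms by (simp add: star_center_mod_def rcos_eq_ideal_iff)
  finally show ?thesis .
qed

end

section \<open>The upper star-central series\<close>

context left_brace
begin

lemma upper_star_central_Suc:
  assumes "brace_ideal A (upper_star_central A n)"
  shows "upper_star_central A (Suc n) = star_center_mod A (upper_star_central A n)"
proof -
  interpret left_brace_ideal A "upper_star_central A n"
    using assms by (rule left_brace_idealI)
  show ?thesis
    using star_center_mod_carrier by (auto simp: rcos_mem_star_center_quot_iff)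
qed

lemma brace_ideal_upper_star_central: "brace_ideal A (upper_star_central A n)"
proof (induction n)
  case 0
  then show ?case by (simp add: brace_ideal_zero)
next
  case (Suc n)
  show ?case
    unfolding upper_star_central_Suc[OF Suc.IH]
    by (rule left_brace_ideal.brace_ideal_star_center_mod[OF left_brace_idealI[OF Suc.IH]])
qed

end

section \<open>Sums of a subbrace and an ideal\<close>

context left_brace_ideal
begin

lemma mem_set_add_ideal_iff:
  assumes "B \<subseteq> carrier A"
  shows "x \<in> B <+> Z \<longleftrightarrow> x \<in> carrier A \<and> (\<exists>b\<in>B. Z +> x = Z +> b)"
proof
  assume "x \<in> B <+> Z"
  then obtain b z where bz: "b \<in> B" "z \<in> Z" and x: "x = b \<oplus> z"
    unfolding set_add_def' by blast
  have "b \<in> carrier A" using bz assms by auto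
  then have "x \<in> carrier A" "Z +> x = Z +> b"
    using bz x ideal_carrier by (simp_all add: rcos_add_mem)
  then show "x \<in> carrier A \<and> (\<exists>b\<in>B. Z +> x = Z +> b)"
    using bz by blast
next
  assume "x \<in> carrier A \<and> (\<exists>b\<in>B. Z +> x = Z +> b)"
  then obtain b z where "b \<in> B" "z \<in> Z" "x = b \<oplus> z"
    using assms rcos_eq_iff by blast
  then show "x \<in> B <+> Z"
    unfolding set_add_def' by blast
qed

lemma mem_set_add_idealI:
  "B \<subseteq> carrier A \<Longrightarrow> x \<in> carrier A \<Longrightarrow> b \<in> B \<Longrightarrow> Z +> x = Z +> b \<Longrightarrow> x \<in> B <+> Z"
  using mem_set_add_ideal_iff by blast

lemma subbrace_set_add:
  assumes B: "subbrace A B"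
  shows "subbrace A (B <+> Z)"
proof (rule subbraceI)
  have BC: "B \<subseteq> carrier A" using subbrace_carrier[OF B] .
  note mem = mem_set_add_ideal_iff[OF BC]
  note memI = mem_set_add_idealI[OF BC]
  show "B <+> Z \<subseteq> carrier A" using mem by blast
  show "\<zero> \<in> B <+> Z" using memI subbrace_zero[OF B] by blast
  fix x y assume "x \<in> B <+> Z" "y \<in> B <+> Z"
  then obtain b b' where xy: "x \<in> carrier A" "y \<in> carrier A" and b: "b \<in> B" "b' \<in> B"
    and rcos: "Z +> x = Z +> b" "Z +> y = Z +> b'"
    using mem by blast
  have bC: "b \<in> carrier A" "b' \<in> carrier A" using b BC by auto
  have "Z +> (x \<oplus> y) = Z +> (b \<oplus> b')"
    using xy bC rcos by (simp add: a_rcos_sum[symmetric])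
  then show "x \<oplus> y \<in> B <+> Z"
    using xy b subbrace_add[OF B] by (intro memI) auto
  show "x \<otimes> y \<in> B <+> Z"
    using xy b rcos_mult[OF xy(1) bC(1) xy(2) bC(2) rcos] subbrace_mult[OF B] by (intro memI) auto
  have "Z +> (\<ominus> x) = Z +> (\<ominus> b)"
    using xy bC rcos by (simp add: a_rcos_inv[symmetric])
  then show "\<ominus> x \<in> B <+> Z"
    using xy b subbrace_a_inv[OF B] by (intro memI) auto
  show "inv x \<in> B <+> Z"
    using xy b rcos_inv[OF xy(1) bC(1) rcos(1)] subbrace_inv[OF B] by (intro memI) auto
qed

lemma set_add_ideal_eq:
  assumes "subbrace A B" "B \<subseteq> Z"
  shows "B <+> Z = Z"
proof
  show "B <+> Z \<subseteq> Z"
    using assms subbrace_add[OF ideal_subbrace] unfolding set_add_def' by blast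
  show "Z \<subseteq> B <+> Z"
    using subbrace_zero[OF assms(1)] ideal_carrier unfolding set_add_def' by force
qed

lemma star_set_add_star_center_mod:
  assumes B: "subbrace A B"
    and u: "u \<in> B <+> star_center_mod A Z" and v: "v \<in> B <+> Z"
  shows "u \<star> v \<in> B <+> Z \<and> v \<star> u \<in> B <+> Z"
proof -
  have C: "left_brace_ideal A (star_center_mod A Z)"
    by (rule left_brace_idealI[OF brace_ideal_star_center_mod])
  have BC: "B \<subseteq> carrier A" using subbrace_carrier[OF B] .
  obtain b c where b: "b \<in> B" and c: "c \<in> star_center_mod A Z" and u_add: "u = b \<oplus> c"
    using u unfolding set_add_def' by blast
  have bC: "b \<in> carrier A" and cC: "c \<in> carrier A" and uC: "u \<in> carrier A"
    using b c BC star_center_mod_carrier u_add by auto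
  \<comment> \<open>the star-centre modulo \<open>Z\<close> is an ideal, so \<open>u\<close> is also \<open>b\<close> times a star-central element\<close>
  obtain c' where c': "c' \<in> star_center_mod A Z" and u_mult: "u = b \<otimes> c'"
    using left_brace_ideal.add_mem_eq_mult_mem[OF C bC c] u_add by metis
  have c'C: "c' \<in> carrier A" using c' star_center_mod_carrier by blast
  obtain b' where b': "b' \<in> B" and v_rcos: "Z +> v = Z +> b'" and vC: "v \<in> carrier A"
    using v mem_set_add_ideal_iff[OF BC] by blast
  have b'C: "b' \<in> carrier A" using b' BC by blast
  have "Z +> (u \<star> v) = Z +> (u \<star> b')"
    by (rule rcos_star[OF uC uC vC b'C refl v_rcos])
  also have "\<dots> = Z +> (b \<star> b')"
    unfolding u_mult by (rule rcos_mult_star[OF bC c'C b'C star_center_modD(1)[OF c' b'C]])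
  finally have "u \<star> v \<in> B <+> Z"
    by (rule mem_set_add_idealI[OF BC star_closed[OF uC vC] subbrace_star[OF B b b']])
  have "Z +> (v \<star> u) = Z +> (b' \<star> u)"
    by (rule rcos_star[OF vC b'C uC uC v_rcos refl])
  also have "b' \<star> u = b' \<star> b \<oplus> b' \<star> c"
    unfolding u_add using b'C bC cC by (rule star_add_right)
  also have "Z +> \<dots> = Z +> (b' \<star> b)"
    using b'C bC star_center_modD(2)[OF c b'C] by (simp add: rcos_add_mem)
  finally have "v \<star> u \<in> B <+> Z"
    by (rule mem_set_add_idealI[OF BC star_closed[OF vC uC] subbrace_star[OF B b' b]])
  with \<open>u \<star> v \<in> B <+> Z\<close> show ?thesis ..
qed

lemma brace_ideal_set_add_in_set_add_star_center_mod:
  assumes B: "subbrace A B"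
  shows "brace_ideal (A\<lparr>carrier := B <+> star_center_mod A Z\<rparr>) (B <+> Z)"
proof (rule brace_ideal_restrict)
  show "subbrace A (B <+> Z)"
    using B by (rule subbrace_set_add)
  show "subbrace A (B <+> star_center_mod A Z)"
    using left_brace_ideal.subbrace_set_add[OF left_brace_idealI[OF brace_ideal_star_center_mod] B] .
  show "B <+> Z \<subseteq> B <+> star_center_mod A Z"
    using ideal_subset_star_center_mod unfolding set_add_def' by blast
qed (use star_set_add_star_center_mod[OF B] in blast)

end

lemma T_brace_ideal_chain:
  assumes "T_brace A" and "i \<le> n" and "brace_ideal A (L n)"
    and "\<And>j. j < n \<Longrightarrow> brace_ideal (A\<lparr>carrier := L (Suc j)\<rparr>) (L j)"
  shows "brace_ideal A (L i)"
  using \<open>i \<le> n\<close>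
proof (induction i rule: inc_induct)
  case base
  show ?case by (rule assms(3))
next
  case (step j)
  then show ?case
    using assms(1,4) unfolding T_brace_def by blast
qed

theorem lemma3p1:
  fixes A :: "('a, 'b) ring_scheme" and n :: nat and a :: 'a
  assumes "T_brace A"
    and "a \<in> upper_star_central A n"
  shows "brace_ideal A (br A a)"
proof -
  interpret left_brace A
    using assms(1) brace_imp_left_brace unfolding T_brace_def by blast
  let ?Z = "upper_star_central A"
  define L where "L i = br A a <+>\<^bsub>A\<^esub> ?Z i" for i
  have Z: "left_brace_ideal A (?Z i)" for i
    by (rule left_brace_idealI[OF brace_ideal_upper_star_central])
  have a: "a \<in> carrier A"
    using assms(2) left_brace_ideal.ideal_carrier[OF Z] by blast
  have B: "subbrace A (br A a)"
    using a by (rule subbrace_br)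
  have "br A a \<subseteq> ?Z n"
    using assms(2) left_brace_ideal.ideal_subbrace[OF Z] by (intro br_subset)
  then have "L n = ?Z n"
    unfolding L_def using B left_brace_ideal.set_add_ideal_eq[OF Z] by blast
  moreover have "brace_ideal (A\<lparr>carrier := L (Suc i)\<rparr>) (L i)" for i
    unfolding L_def upper_star_central_Suc[OF brace_ideal_upper_star_central]
    by (rule left_brace_ideal.brace_ideal_set_add_in_set_add_star_center_mod[OF Z B])
  ultimately have "brace_ideal A (L 0)"
    using T_brace_ideal_chain[OF assms(1), of 0 n L] brace_ideal_upper_star_central by simp
  then show ?thesis
    unfolding L_def using subbrace_carrier[OF B] by (simp add: set_add_zero)
qed

end
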